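(* Let $k\ge 2$ and $\ell_1\ge \ell_2\ge\cdots\ge \ell_k\ge 0$ be integers, let $B=B(\ell_1,\dots,\ell_k)$ and $n=2k+\sum_{i=1}^k\ell_i$. Then for every integer $t\ge 1$, \[(t-1)(k+\ell_1)+n+k(k-2)\le \hat r(tK_2,B)\le n+(t-1)\ell_1+(k+t-1)^2-2k.\]
   Context: All graphs are finite and simple. For integers $k\ge 2$ and $\ell_1\ge\cdots\ge\ell_k\ge0$, $B(\ell_1,\dots,\ell_k)$ is the graph obtained from the complete bipartite graph $K_{k,k}$ by attaching $\ell_i$ pendant edges (each to a new leaf vertex) to the $i$-th vertex of one fixed part of the bipartition, for $i=1,\dots,k$. $tK_2$ is a matching with $t$ edges. For graphs $F,G,H$, $F\to(G,H)$ means every red--blue coloring of $E(F)$ contains a red copy of $G$ or a blue copy of $H$, and $\hat r(G,H)=\min\{|E(F)|:F\to(G,H)\}$. *)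

theory Defs
  imports Main
begin

text \<open>Vertices of a pattern graph are those covered by its edges
(the pattern graphs used here have no isolated vertices).\<close>

definition is_graph :: "'a set set \<Rightarrow> bool" where
  "is_graph E \<longleftrightarrow> finite E \<and> (\<forall>e\<in>E. card e = 2)"

definition contains_copy :: "'b set set \<Rightarrow> 'a set set \<Rightarrow> bool" where
  "contains_copy H G \<longleftrightarrow> (\<exists>f. inj_on f (\<Union>G) \<and> (\<forall>e\<in>G. f ` e \<in> H))"

text \<open>F \<rightarrow> (G,H): every red/blue colouring (c e = True means red) of the edges of F has
a red copy of G or a blue copy of H.\<close>
definition arrows :: "'c set set \<Rightarrow> 'a set set \<Rightarrow> 'b set set \<Rightarrow> bool" where
  "arrows F G H \<longleftrightarrow>
     (\<forall>c :: 'c set \<Rightarrow> bool. contains_copy {e\<in>F. c e} G \<or> contains_copy {e\<in>F. \<not> c e} H)"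

text \<open>Size Ramsey number; host graphs are taken on vertex set nat (every finite graph is
isomorphic to one on nat).\<close>
definition size_ramsey :: "'a set set \<Rightarrow> 'b set set \<Rightarrow> nat" where
  "size_ramsey G H = (LEAST m. \<exists>F :: nat set set. is_graph F \<and> card F = m \<and> arrows F G H)"

definition matching :: "nat \<Rightarrow> (nat \<times> bool) set set" where
  "matching t = {{(i, False), (i, True)} | i. i < t}"

datatype bvert = PA nat | PB nat | Leaf nat nat

text \<open>B(l_1,...,l_k): K_{k,k} with parts PA 1..PA k and PB 1..PB k, plus l i pendant edges
at PA i (leaves Leaf i 1, ..., Leaf i (l i)).\<close>
definition Bgraph :: "nat \<Rightarrow> (nat \<Rightarrow> nat) \<Rightarrow> bvert set set" where
  "Bgraph k l = {{PA i, PB j} | i j. i \<in> {1..k} \<and> j \<in> {1..k}}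
              \<union> {{PA i, Leaf i j} | i j. i \<in> {1..k} \<and> j \<in> {1..l i}}"

end

theory Submission
  imports Defs "HOL-Library.Countable"
begin

text \<open>Lower bound: colouring all edges blue shows that a host F with
F \<rightarrow> ((t+1)K_2, H) contains H, hence a vertex v whose degree is at least the maximum
degree of H. Colouring the edges at v red, any red (t+1)-matching keeps t edges avoiding v,
so F - v \<rightarrow> (tK_2, H); induction on t gives |F| \<ge> t \<Delta>(H) + |H|, and \<Delta>(B) = k + l_1.

Upper bound: the host is B(l_1,...,l_1,l_2,...,l_k) with l_1 repeated t times, a graph of
the same shape on k + t - 1 vertices per part. If a colouring has no blue B, the host contains
a red edge; deleting its endpoint in the first part (and its other endpoint unless that is a
leaf) leaves a graph that still contains the host for t - 1, up to extra pendant edges, so a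
red t-matching is found greedily.\<close>

subsection \<open>Copies and matchings\<close>

lemma Union_matching: "\<Union>(matching t) = {..<t} \<times> UNIV"
proof -
  have "(i, b) \<in> {(i, False), (i, True)}" for i b
    by (cases b) simp_all
  then show ?thesis
    unfolding matching_def by auto
qed

lemma mem_matching: "e \<in> matching t \<longleftrightarrow> (\<exists>i<t. e = {(i, False), (i, True)})"
  unfolding matching_def by auto

lemma contains_copy_matching_0: "contains_copy R (matching 0)"
  unfolding contains_copy_def matching_def by simp

lemma contains_copy_mono: "contains_copy H G \<Longrightarrow> H \<subseteq> H' \<Longrightarrow> contains_copy H' G"
  unfolding contains_copy_def by blast

lemma contains_copy_empty_iff: "contains_copy {} G \<longleftrightarrow> G = {}"
  unfolding contains_copy_def by auto

lemma inj_on_image_edges: "inj_on f (\<Union>G) \<Longrightarrow> inj_on ((`) f) G"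
  by (rule inj_onI) (meson Sup_upper inj_on_image_eq_iff)

lemma card_le_if_contains_copy:
  assumes "contains_copy F G" "finite F"
  shows "card G \<le> card F"
proof -
  obtain f where "inj_on f (\<Union>G)" "\<forall>e\<in>G. f ` e \<in> F"
    using assms(1) unfolding contains_copy_def by blast
  then show ?thesis
    using assms(2) by (intro card_inj_on_le[OF inj_on_image_edges]) auto
qed

definition degree :: "'a set set \<Rightarrow> 'a \<Rightarrow> nat" where
  "degree E v = card {e\<in>E. v \<in> e}"

lemma degree_le_if_contains_copy:
  assumes "contains_copy F G" "finite F"
  shows "\<exists>w. degree G u \<le> degree F w"
proof -
  obtain f where f: "inj_on f (\<Union>G)" "\<forall>e\<in>G. f ` e \<in> F"
    using assms(1) unfolding contains_copy_def by blast
  have "inj_on ((`) f) {e\<in>G. u \<in> e}"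
    using inj_on_image_edges[OF f(1)] by (rule inj_on_subset) auto
  moreover have "(`) f ` {e\<in>G. u \<in> e} \<subseteq> {e\<in>F. f u \<in> e}"
    using f(2) by auto
  ultimately have "degree G u \<le> degree F (f u)"
    unfolding degree_def using assms(2) by (simp add: card_inj_on_le)
  then show ?thesis ..
qed

definition skip :: "nat \<Rightarrow> nat \<Rightarrow> nat" where
  "skip p i = (if i < p then i else Suc i)"

lemma inj_skip: "inj (skip p)"
  by (rule injI) (auto simp: skip_def split: if_splits)

lemma skip_neq: "skip p i \<noteq> p"
  by (simp add: skip_def)

lemma skip_bounds: "i \<le> skip p i" "skip p i \<le> Suc i"
  by (simp_all add: skip_def)

lemma contains_copy_matching_avoiding:
  assumes "contains_copy R (matching (Suc t))"
  shows "contains_copy {e\<in>R. v \<notin> e} (matching t)"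
proof -
  obtain f where inj: "inj_on f ({..<Suc t} \<times> UNIV)"
    and im: "\<forall>e\<in>matching (Suc t). f ` e \<in> R"
    using assms unfolding contains_copy_def Union_matching by blast
  obtain p where p: "\<And>i. i < Suc t \<Longrightarrow> v \<in> f ` {(i, False), (i, True)} \<Longrightarrow> i = p"
  proof (cases "\<exists>p<Suc t. v \<in> f ` {(p, False), (p, True)}")
    case True
    then obtain p b where pb: "p < Suc t" "v = f (p, b)" by auto
    show ?thesis
    proof (rule that)
      fix i assume "i < Suc t" "v \<in> f ` {(i, False), (i, True)}"
      then obtain b' where "f (i, b') = f (p, b)" "i < Suc t" using pb by auto
      then show "i = p" using inj_onD[OF inj] pb(1) by blast
    qed
  qed blast
  have skip_lt: "skip p i < Suc t" if "i < t" for i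
    using that skip_bounds(2)[of p i] by simp
  define g where "g = f \<circ> map_prod (skip p) id"
  show ?thesis
    unfolding contains_copy_def Union_matching
  proof (intro exI conjI ballI)
    have "map_prod (skip p) id ` ({..<t} \<times> UNIV) \<subseteq> {..<Suc t} \<times> UNIV"
      using skip_lt by auto
    then show "inj_on g ({..<t} \<times> UNIV)"
      unfolding g_def using inj_skip
      by (intro comp_inj_on map_prod_inj_on inj_on_subset[OF inj]) (auto intro: inj_on_subset)
  next
    fix e assume "e \<in> matching t"
    then obtain i where i: "i < t" "e = {(i, False), (i, True)}"
      unfolding mem_matching by auto
    have "{(skip p i, False), (skip p i, True)} \<in> matching (Suc t)"
      using skip_lt[OF i(1)] unfolding mem_matching by blast
    then have "f ` {(skip p i, False), (skip p i, True)} \<in> R"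
      using im by blast
    moreover have "g ` e = f ` {(skip p i, False), (skip p i, True)}"
      using i by (simp add: g_def)
    moreover have "v \<notin> f ` {(skip p i, False), (skip p i, True)}"
      using p[OF skip_lt[OF i(1)]] skip_neq[of p i] by blast
    ultimately show "g ` e \<in> {e\<in>R. v \<notin> e}" by simp
  qed
qed

lemma contains_copy_matching_Suc:
  assumes "contains_copy {e\<in>R. u \<notin> e \<and> v \<notin> e} (matching s)" "{u, v} \<in> R" "u \<noteq> v"
  shows "contains_copy R (matching (Suc s))"
proof -
  obtain f where inj: "inj_on f ({..<s} \<times> UNIV)"
    and im: "\<forall>e\<in>matching s. f ` e \<in> {e\<in>R. u \<notin> e \<and> v \<notin> e}"
    using assms(1) unfolding contains_copy_def Union_matching by blast
  have avoid: "f (i, b) \<noteq> u \<and> f (i, b) \<noteq> v" if "i < s" for i b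
  proof -
    have "{(i, False), (i, True)} \<in> matching s"
      using that unfolding mem_matching by blast
    then have "u \<notin> f ` {(i, False), (i, True)} \<and> v \<notin> f ` {(i, False), (i, True)}"
      using im by blast
    then show ?thesis by (cases b) auto
  qed
  define g where "g x = (if fst x = s then (if snd x then v else u) else f x)" for x
  show ?thesis
    unfolding contains_copy_def Union_matching
  proof (intro exI conjI ballI)
    show "inj_on g ({..<Suc s} \<times> UNIV)"
    proof (rule inj_onI, clarify)
      fix i b j c
      assume ij: "i < Suc s" "j < Suc s" and eq: "g (i, b) = g (j, c)"
      show "i = j \<and> b = c"
      proof (cases "i = s"; cases "j = s")
        assume "i = s" "j = s"
        then show ?thesis using eq assms(3) by (cases b; cases c) (simp_all add: g_def)
      next
        assume "i = s" "j \<noteq> s"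
        then show ?thesis using eq ij avoid[of j c] by (cases b) (simp_all add: g_def)
      next
        assume "i \<noteq> s" "j = s"
        then show ?thesis using eq ij avoid[of i b] by (cases c) (simp_all add: g_def)
      next
        assume "i \<noteq> s" "j \<noteq> s"
        then show ?thesis
          using eq ij inj_onD[OF inj, of "(i, b)" "(j, c)"] by (simp add: g_def)
      qed
    qed
  next
    fix e assume "e \<in> matching (Suc s)"
    then obtain i where i: "i < Suc s" "e = {(i, False), (i, True)}"
      unfolding mem_matching by auto
    show "g ` e \<in> R"
    proof (cases "i = s")
      case True
      then have "g ` e = {u, v}"
        using i by (auto simp: g_def)
      then show ?thesis using assms(2) by simp
    next
      case False
      then have "i < s" using i(1) by simp
      then have "g ` e = f ` e" "e \<in> matching s"
        using i(2) unfolding mem_matching by (auto simp: g_def)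
      then show ?thesis using im by simp
    qed
  qed
qed

subsection \<open>Arrowing and the size Ramsey number\<close>

lemma arrows_contains_copy:
  assumes "arrows F (matching (Suc t)) H"
  shows "contains_copy F H"
proof -
  have "matching (Suc t) \<noteq> {}"
    unfolding matching_def by auto
  moreover have "contains_copy {e\<in>F. False} (matching (Suc t)) \<or> contains_copy {e\<in>F. \<not> False} H"
    using assms unfolding arrows_def by (rule allE[where x = "\<lambda>_. False"])
  ultimately show ?thesis
    by (simp add: contains_copy_empty_iff)
qed

lemma arrows_delete_vertex:
  assumes "arrows F (matching (Suc t)) H"
  shows "arrows {e\<in>F. v \<notin> e} (matching t) H"
  unfolding arrows_def
proof
  fix c :: "'a set \<Rightarrow> bool"
  have "contains_copy {e\<in>F. v \<in> e \<or> c e} (matching (Suc t))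
      \<or> contains_copy {e\<in>F. \<not> (v \<in> e \<or> c e)} H"
    using assms unfolding arrows_def by (rule allE[where x = "\<lambda>e. v \<in> e \<or> c e"])
  then show "contains_copy {e\<in>{e\<in>F. v \<notin> e}. c e} (matching t)
      \<or> contains_copy {e\<in>{e\<in>F. v \<notin> e}. \<not> c e} H"
  proof (elim disjE)
    assume "contains_copy {e\<in>F. v \<in> e \<or> c e} (matching (Suc t))"
    then have "contains_copy {e\<in>{e\<in>F. v \<in> e \<or> c e}. v \<notin> e} (matching t)"
      by (rule contains_copy_matching_avoiding)
    moreover have "{e\<in>{e\<in>F. v \<in> e \<or> c e}. v \<notin> e} = {e\<in>{e\<in>F. v \<notin> e}. c e}"
      by blast
    ultimately show ?thesis by simp
  next
    assume "contains_copy {e\<in>F. \<not> (v \<in> e \<or> c e)} H"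
    moreover have "{e\<in>F. \<not> (v \<in> e \<or> c e)} = {e\<in>{e\<in>F. v \<notin> e}. \<not> c e}"
      by blast
    ultimately show ?thesis by simp
  qed
qed

lemma card_ge_if_arrows_matching:
  assumes "finite F" "arrows F (matching (Suc t)) H"
  shows "t * degree H u + card H \<le> card F"
  using assms
proof (induction t arbitrary: F)
  case 0
  then show ?case
    using card_le_if_contains_copy[OF arrows_contains_copy[OF 0(2)] 0(1)] by simp
next
  case (Suc t)
  obtain w where w: "degree H u \<le> degree F w"
    using degree_le_if_contains_copy[OF arrows_contains_copy[OF Suc.prems(2)] Suc.prems(1)] by blast
  have "t * degree H u + card H \<le> card {e\<in>F. w \<notin> e}"
    using Suc.IH[OF _ arrows_delete_vertex[OF Suc.prems(2)]] Suc.prems(1) by simp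
  moreover have "card F = card ({e\<in>F. w \<in> e} \<union> {e\<in>F. w \<notin> e})"
    by (rule arg_cong[where f = card]) blast
  then have "card F = degree F w + card {e\<in>F. w \<notin> e}"
    unfolding degree_def using Suc.prems(1) by (simp add: card_Un_disjoint disjoint_iff)
  ultimately show ?case
    using w by simp
qed

lemma contains_copy_image:
  assumes "inj h" "contains_copy {e\<in>F. P (h ` e)} K"
  shows "contains_copy {e\<in>(`) h ` F. P e} K"
proof -
  obtain f where f: "inj_on f (\<Union>K)" "\<forall>e\<in>K. f ` e \<in> {e\<in>F. P (h ` e)}"
    using assms(2) unfolding contains_copy_def by blast
  have "inj_on (h \<circ> f) (\<Union>K)"
    using f(1) inj_on_subset[OF assms(1)] by (rule comp_inj_on) simp
  moreover have "(h \<circ> f) ` e \<in> {e\<in>(`) h ` F. P e}" if "e \<in> K" for e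
  proof -
    have "f ` e \<in> F" "P (h ` f ` e)"
      using f(2) that by auto
    then show ?thesis
      unfolding image_comp[symmetric] by blast
  qed
  ultimately show ?thesis
    unfolding contains_copy_def by blast
qed

lemma arrows_image:
  assumes "inj h" "arrows F G H"
  shows "arrows ((`) h ` F) G H"
  unfolding arrows_def
proof
  fix c :: "'b set \<Rightarrow> bool"
  have "contains_copy {e\<in>F. c (h ` e)} G \<or> contains_copy {e\<in>F. \<not> c (h ` e)} H"
    using assms(2) unfolding arrows_def by (rule allE[where x = "\<lambda>e. c (h ` e)"])
  then show "contains_copy {e\<in>(`) h ` F. c e} G \<or> contains_copy {e\<in>(`) h ` F. \<not> c e} H"
    using contains_copy_image[OF assms(1), of F c G]
      contains_copy_image[OF assms(1), of F "\<lambda>e. \<not> c e" H] by blast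
qed

lemma is_graph_image:
  assumes "inj h" "is_graph F"
  shows "is_graph ((`) h ` F)"
  using assms unfolding is_graph_def by (auto simp: card_image inj_on_subset)

lemma card_image_edges: "inj h \<Longrightarrow> card ((`) h ` F) = card F"
  by (rule card_image) (simp add: inj_on_def inj_image_eq_iff)

lemma size_ramsey_le:
  fixes F :: "'c::countable set set"
  assumes "is_graph F" "arrows F G H"
  shows "size_ramsey G H \<le> card F"
proof -
  let ?F = "(`) to_nat ` F"
  have "is_graph ?F" "arrows ?F G H" "card ?F = card F"
    using is_graph_image[OF inj_to_nat assms(1)] arrows_image[OF inj_to_nat assms(2)]
      card_image_edges[OF inj_to_nat] by blast+
  then show ?thesis
    unfolding size_ramsey_def by (metis (mono_tags, lifting) Least_le)
qed

lemma size_ramsey_attained: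
  fixes F :: "'c::countable set set"
  assumes "is_graph F" "arrows F G H"
  obtains F' :: "nat set set"
  where "is_graph F'" "arrows F' G H" "card F' = size_ramsey G H"
proof -
  let ?P = "\<lambda>m. \<exists>F'::nat set set. is_graph F' \<and> card F' = m \<and> arrows F' G H"
  have "?P (card ((`) to_nat ` F))"
    using is_graph_image[OF inj_to_nat assms(1)] arrows_image[OF inj_to_nat assms(2)] by blast
  then have "?P (size_ramsey G H)"
    unfolding size_ramsey_def by (rule LeastI)
  then show ?thesis
    using that by blast
qed

lemma size_ramsey_matching_ge:
  fixes F :: "'c::countable set set"
  assumes "is_graph F" "arrows F (matching (Suc t)) H"
  shows "t * degree H u + card H \<le> size_ramsey (matching (Suc t)) H"
proof -
  obtain F' :: "nat set set" where "is_graph F'" "arrows F' (matching (Suc t)) H"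
    "card F' = size_ramsey (matching (Suc t)) H"
    using assms by (rule size_ramsey_attained)
  then show ?thesis
    using card_ge_if_arrows_matching[of F' t H u] unfolding is_graph_def by simp
qed

subsection \<open>The graphs B on arbitrary index sets\<close>

instance bvert :: countable
  by countable_datatype

definition Bgraph_on :: "nat set \<Rightarrow> nat set \<Rightarrow> (nat \<Rightarrow> nat) \<Rightarrow> bvert set set" where
  "Bgraph_on I J L = {{PA i, PB j} | i j. i \<in> I \<and> j \<in> J}
                   \<union> {{PA i, Leaf i j} | i j. i \<in> I \<and> j \<in> {1..L i}}"

lemma Bgraph_eq_Bgraph_on: "Bgraph k l = Bgraph_on {1..k} {1..k} l"
  unfolding Bgraph_def Bgraph_on_def by simp

lemma Bgraph_on_mono: "I' \<subseteq> I \<Longrightarrow> J' \<subseteq> J \<Longrightarrow> Bgraph_on I' J' L \<subseteq> Bgraph_on I J L"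
  unfolding Bgraph_on_def by blast

lemma Bgraph_on_eq_images:
  "Bgraph_on I J L = (\<lambda>(i, j). {PA i, PB j}) ` (I \<times> J)
                   \<union> (\<lambda>(i, j). {PA i, Leaf i j}) ` (SIGMA i:I. {1..L i})"
  unfolding Bgraph_on_def by auto

lemma card_Bgraph_on:
  assumes "finite I" "finite J"
  shows "card (Bgraph_on I J L) = card I * card J + (\<Sum>i\<in>I. L i)"
proof -
  have "inj_on (\<lambda>(i, j). {PA i, PB j}) (I \<times> J)"
    "inj_on (\<lambda>(i, j). {PA i, Leaf i j}) (SIGMA i:I. {1..L i})"
    by (auto simp: inj_on_def doubleton_eq_iff)
  moreover have "(\<lambda>(i, j). {PA i, PB j}) ` (I \<times> J)
      \<inter> (\<lambda>(i, j). {PA i, Leaf i j}) ` (SIGMA i:I. {1..L i}) = {}"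
    by (auto simp: doubleton_eq_iff)
  ultimately have "card (Bgraph_on I J L) = card (I \<times> J) + card (SIGMA i:I. {1..L i})"
    unfolding Bgraph_on_eq_images using assms
    by (subst card_Un_disjoint) (simp_all add: card_image del: Sigma_cong)
  then show ?thesis
    using assms by (simp add: card_cartesian_product card_SigmaI)
qed

lemma is_graph_Bgraph_on: "finite I \<Longrightarrow> finite J \<Longrightarrow> is_graph (Bgraph_on I J L)"
  unfolding is_graph_def Bgraph_on_eq_images by auto

lemma degree_Bgraph_on_PA:
  assumes "i \<in> I" "finite J"
  shows "degree (Bgraph_on I J L) (PA i) = card J + L i"
proof -
  have "{e\<in>Bgraph_on I J L. PA i \<in> e} = Bgraph_on {i} J L"
    using assms(1) unfolding Bgraph_on_def by auto
  then show ?thesis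
    unfolding degree_def using assms(2) by (simp add: card_Bgraph_on)
qed

lemma edge_PA_PB_in_Bgraph_on: "i \<in> I \<Longrightarrow> j \<in> J \<Longrightarrow> {PA i, PB j} \<in> Bgraph_on I J L"
  unfolding Bgraph_on_def by blast

lemma edge_PA_Leaf_in_Bgraph_on:
  "i \<in> I \<Longrightarrow> j \<in> {1..L i} \<Longrightarrow> {PA i, Leaf i j} \<in> Bgraph_on I J L"
  unfolding Bgraph_on_def by blast

lemma contains_copy_Bgraph_on:
  assumes "inj_on \<sigma> I'" "\<sigma> ` I' \<subseteq> I" "inj_on \<tau> J'" "\<tau> ` J' \<subseteq> J"
    and "\<And>i. i \<in> I' \<Longrightarrow> L' i \<le> L (\<sigma> i)"
  shows "contains_copy (Bgraph_on I J L) (Bgraph_on I' J' L')"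
proof -
  define f where "f v = (case v of PA i \<Rightarrow> PA (\<sigma> i) | PB j \<Rightarrow> PB (\<tau> j)
    | Leaf i j \<Rightarrow> Leaf (\<sigma> i) j)" for v
  define g where "g v = (case v of PA i \<Rightarrow> PA (inv_into I' \<sigma> i) | PB j \<Rightarrow> PB (inv_into J' \<tau> j)
    | Leaf i j \<Rightarrow> Leaf (inv_into I' \<sigma> i) j)" for v
  have "g (f v) = v" if "v \<in> \<Union>(Bgraph_on I' J' L')" for v
    using that assms(1,3) unfolding Bgraph_on_def by (cases v) (auto simp: f_def g_def)
  then have "inj_on f (\<Union>(Bgraph_on I' J' L'))"
    by (rule inj_on_inverseI)
  moreover have "f ` e \<in> Bgraph_on I J L" if "e \<in> Bgraph_on I' J' L'" for e
  proof -
    from that consider i j where "i \<in> I'" "j \<in> J'" "e = {PA i, PB j}"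
      | i j where "i \<in> I'" "j \<in> {1..L' i}" "e = {PA i, Leaf i j}"
      unfolding Bgraph_on_def by blast
    then show ?thesis
    proof cases
      case 1
      then show ?thesis
        using assms(2,4) by (auto simp: f_def intro: edge_PA_PB_in_Bgraph_on)
    next
      case 2
      then have "j \<in> {1..L (\<sigma> i)}"
        using assms(5)[of i] by auto
      moreover have "\<sigma> i \<in> I"
        using 2 assms(2) by blast
      ultimately show ?thesis
        using 2 edge_PA_Leaf_in_Bgraph_on by (simp add: f_def)
    qed
  qed
  ultimately show ?thesis
    unfolding contains_copy_def by blast
qed

subsection \<open>Greedy red matchings in the upper-bound host\<close>

definition rows_dominate :: "nat set \<Rightarrow> (nat \<Rightarrow> nat) \<Rightarrow> (nat \<Rightarrow> nat) \<Rightarrow> nat \<Rightarrow> bool" where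
  "rows_dominate I L P N \<longleftrightarrow>
     (\<exists>\<sigma>. inj_on \<sigma> {1..N} \<and> \<sigma> ` {1..N} \<subseteq> I \<and> (\<forall>i\<in>{1..N}. P i \<le> L (\<sigma> i)))"

lemma rows_dominate_mono:
  assumes "rows_dominate I L P N" "N' \<le> N" "\<And>i. i \<in> {1..N'} \<Longrightarrow> P' i \<le> P i"
  shows "rows_dominate I L P' N'"
proof -
  obtain \<sigma> where \<sigma>: "inj_on \<sigma> {1..N}" "\<sigma> ` {1..N} \<subseteq> I" "\<forall>i\<in>{1..N}. P i \<le> L (\<sigma> i)"
    using assms(1) unfolding rows_dominate_def by blast
  have sub: "{1..N'} \<subseteq> {1..N}"
    using assms(2) by auto
  have "inj_on \<sigma> {1..N'}"
    using \<sigma>(1) sub by (rule inj_on_subset)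
  moreover have "\<sigma> ` {1..N'} \<subseteq> I"
    using \<sigma>(2) sub by blast
  moreover have "P' i \<le> L (\<sigma> i)" if "i \<in> {1..N'}" for i
    using assms(3)[OF that] \<sigma>(3) sub that by (meson order_trans subsetD)
  ultimately show ?thesis
    unfolding rows_dominate_def by blast
qed

lemma rows_dominate_delete:
  assumes "rows_dominate I L P (Suc N)" "\<And>i. i \<in> {1..N} \<Longrightarrow> P (Suc i) \<le> P i"
  shows "rows_dominate (I - {x}) L (\<lambda>i. P (Suc i)) N"
proof -
  obtain \<sigma> where \<sigma>: "inj_on \<sigma> {1..Suc N}" "\<sigma> ` {1..Suc N} \<subseteq> I"
    "\<forall>i\<in>{1..Suc N}. P i \<le> L (\<sigma> i)"
    using assms(1) unfolding rows_dominate_def by blast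
  obtain p where p: "p \<in> {1..Suc N}" "\<And>q. q \<in> {1..Suc N} \<Longrightarrow> \<sigma> q = x \<Longrightarrow> q = p"
  proof (cases "x \<in> \<sigma> ` {1..Suc N}")
    case True
    then obtain p where "p \<in> {1..Suc N}" "\<sigma> p = x" by blast
    then show ?thesis
      using inj_onD[OF \<sigma>(1)] that by metis
  next
    case False
    then show ?thesis
      by (intro that[of "Suc N"]) auto
  qed
  \<comment> \<open>Rows after the position p of x move up by one, which P being non-increasing allows.\<close>
  have skip_in: "skip p i \<in> {1..Suc N}" if "i \<in> {1..N}" for i
    using that skip_bounds[where p = p and i = i] by auto
  have "inj_on (\<sigma> \<circ> skip p) {1..N}"
    using inj_on_subset[OF inj_skip] \<sigma>(1) skip_in
    by (intro comp_inj_on) (auto intro: inj_on_subset)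
  moreover have "(\<sigma> \<circ> skip p) ` {1..N} \<subseteq> I - {x}"
  proof (rule image_subsetI)
    fix i assume "i \<in> {1..N}"
    then show "(\<sigma> \<circ> skip p) i \<in> I - {x}"
      using \<sigma>(2) skip_in p(2) skip_neq[of p i] by (metis Diff_iff comp_apply image_subset_iff singletonD)
  qed
  moreover have "P (Suc i) \<le> L ((\<sigma> \<circ> skip p) i)" if "i \<in> {1..N}" for i
  proof -
    have "P (Suc i) \<le> P (skip p i)"
      using assms(2)[OF that] by (cases "i < p") (simp_all add: skip_def)
    also have "\<dots> \<le> L (\<sigma> (skip p i))"
      using \<sigma>(3) skip_in[OF that] by blast
    finally show ?thesis by simp
  qed
  ultimately show ?thesis
    unfolding rows_dominate_def by blast
qed

lemma contains_copy_Bgraph_if_rows_dominate: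
  assumes "rows_dominate I L l k" "finite J" "k \<le> card J"
  shows "contains_copy (Bgraph_on I J L) (Bgraph k l)"
proof -
  obtain \<sigma> where \<sigma>: "inj_on \<sigma> {1..k}" "\<sigma> ` {1..k} \<subseteq> I" "\<forall>i\<in>{1..k}. l i \<le> L (\<sigma> i)"
    using assms(1) unfolding rows_dominate_def by blast
  obtain \<tau> where \<tau>: "\<tau> ` {1..k} \<subseteq> J" "inj_on \<tau> {1..k}"
    using card_le_inj[of "{1..k}" J] assms(2,3) by auto
  show ?thesis
    unfolding Bgraph_eq_Bgraph_on using \<sigma> \<tau> by (intro contains_copy_Bgraph_on) auto
qed

text \<open>The pendant numbers l_1 (r + 1 times), l_2, ..., l_k of the host graph for (r + 1)K_2.\<close>

definition pad_first :: "(nat \<Rightarrow> nat) \<Rightarrow> nat \<Rightarrow> nat \<Rightarrow> nat" where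
  "pad_first l r i = (if i \<le> r then l 1 else l (i - r))"

lemma pad_first_Suc_Suc [simp]: "pad_first l (Suc r) (Suc i) = pad_first l r i"
  by (simp add: pad_first_def)

lemma le_pad_first:
  assumes "\<And>i j. 1 \<le> i \<Longrightarrow> i \<le> j \<Longrightarrow> j \<le> k \<Longrightarrow> l j \<le> l i" "i \<in> {1..k}"
  shows "l i \<le> pad_first l r i"
  using assms by (simp add: pad_first_def)

lemma pad_first_Suc_le:
  assumes "\<And>i j. 1 \<le> i \<Longrightarrow> i \<le> j \<Longrightarrow> j \<le> k \<Longrightarrow> l j \<le> l i" "i < k + r"
  shows "pad_first l r (Suc i) \<le> pad_first l r i"
  using assms by (auto simp: pad_first_def Suc_diff_le)

lemma sum_pad_first: "(\<Sum>i=1..k+r. pad_first l r i) = r * l 1 + (\<Sum>i=1..k. l i)"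
proof -
  have "{1..k+r} = {1..r} \<union> {1+r..k+r}"
    by auto
  then have "(\<Sum>i=1..k+r. pad_first l r i)
      = (\<Sum>i=1..r. pad_first l r i) + (\<Sum>i=1+r..k+r. pad_first l r i)"
    by (simp add: sum.union_disjoint)
  also have "(\<Sum>i=1..r. pad_first l r i) = r * l 1"
    by (simp add: pad_first_def)
  also have "(\<Sum>i=1+r..k+r. pad_first l r i) = (\<Sum>i=1..k. pad_first l r (i + r))"
    by (rule sum.shift_bounds_cl_nat_ivl)
  also have "\<dots> = (\<Sum>i=1..k. l i)"
    by (rule sum.cong) (auto simp: pad_first_def)
  finally show ?thesis .
qed

lemma red_matching_Suc_in_Bgraph_on:
  assumes red: "e \<in> Bgraph_on I J L" "c e" and "finite J"
    and reduced: "\<And>x J'. x \<in> I \<Longrightarrow> J' \<subseteq> J \<Longrightarrow> card J \<le> Suc (card J')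
      \<Longrightarrow> contains_copy {e \<in> Bgraph_on (I - {x}) J' L. c e} (matching s)"
  shows "contains_copy {e \<in> Bgraph_on I J L. c e} (matching (Suc s))"
proof -
  obtain x w J' where x: "x \<in> I" and J': "J' \<subseteq> J" "card J \<le> Suc (card J')"
    and e: "e = {PA x, w}" "PA x \<noteq> w"
    and avoid: "\<And>e'. e' \<in> Bgraph_on (I - {x}) J' L \<Longrightarrow> PA x \<notin> e' \<and> w \<notin> e'"
  proof -
    from red(1) consider x y where "x \<in> I" "y \<in> J" "e = {PA x, PB y}"
      | x j where "x \<in> I" "e = {PA x, Leaf x j}"
      unfolding Bgraph_on_def by blast
    then show ?thesis
    proof cases
      case (1 x y)
      moreover have "card J \<le> Suc (card (J - {y}))"
        using \<open>finite J\<close> by (auto simp: card_Diff_singleton_if)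
      ultimately show ?thesis
        by (intro that[of x "J - {y}" "PB y"]) (auto simp: Bgraph_on_def)
    next
      case (2 x j)
      then show ?thesis
        by (intro that[of x J "Leaf x j"]) (auto simp: Bgraph_on_def)
    qed
  qed
  have "{e' \<in> Bgraph_on (I - {x}) J' L. c e'}
      \<subseteq> {e' \<in> {e \<in> Bgraph_on I J L. c e}. PA x \<notin> e' \<and> w \<notin> e'}"
    using avoid Bgraph_on_mono[of "I - {x}" I J' J L] J'(1) by blast
  then have "contains_copy {e' \<in> {e \<in> Bgraph_on I J L. c e}. PA x \<notin> e' \<and> w \<notin> e'} (matching s)"
    using reduced[OF x J'] by (rule contains_copy_mono[rotated])
  moreover have "{PA x, w} \<in> {e \<in> Bgraph_on I J L. c e}"
    using red e by simp
  ultimately show ?thesis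
    using e(2) by (rule contains_copy_matching_Suc)
qed

lemma red_matching_in_Bgraph_on:
  assumes mono: "\<And>i j. 1 \<le> i \<Longrightarrow> i \<le> j \<Longrightarrow> j \<le> k \<Longrightarrow> l j \<le> l i"
    and no_blue: "\<not> contains_copy {e \<in> H. \<not> c e} (Bgraph k l)"
    and "Bgraph_on I J L \<subseteq> H" "finite J" "k + r \<le> card J"
    and "rows_dominate I L (pad_first l r) (k + r)"
  shows "contains_copy {e \<in> Bgraph_on I J L. c e} (matching (Suc r))"
proof -
  have red_edge: "\<exists>e \<in> Bgraph_on I J L. c e"
    if "Bgraph_on I J L \<subseteq> H" "finite J" "k + r \<le> card J"
      and "rows_dominate I L (pad_first l r) (k + r)" for I J r
  proof (rule ccontr)
    assume "\<not> ?thesis"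
    then have "Bgraph_on I J L \<subseteq> {e \<in> H. \<not> c e}"
      using that(1) by blast
    moreover have "rows_dominate I L l k"
      using that(4) le_add1 le_pad_first[where k = k and l = l and r = r, OF mono]
      by (rule rows_dominate_mono)
    then have "contains_copy (Bgraph_on I J L) (Bgraph k l)"
      using that(2,3) by (intro contains_copy_Bgraph_if_rows_dominate) auto
    ultimately show False
      using no_blue contains_copy_mono by blast
  qed
  show ?thesis
    using assms(3-)
  proof (induction r arbitrary: I J)
    case 0
    then obtain e where "e \<in> Bgraph_on I J L" "c e"
      using red_edge by blast
    then show ?case
      using 0(2) contains_copy_matching_0 by (rule red_matching_Suc_in_Bgraph_on)
  next
    case (Suc r)
    obtain e where "e \<in> Bgraph_on I J L" "c e"
      using red_edge Suc.prems by blast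
    then show ?case
      using Suc.prems(2)
    proof (rule red_matching_Suc_in_Bgraph_on)
      fix x J' assume "x \<in> I" "J' \<subseteq> J" "card J \<le> Suc (card J')"
      have "rows_dominate (I - {x}) L (\<lambda>i. pad_first l (Suc r) (Suc i)) (k + r)"
        using Suc.prems(4) pad_first_Suc_le[where k = k and l = l and r = "Suc r", OF mono]
        by (intro rows_dominate_delete) auto
      then have "rows_dominate (I - {x}) L (pad_first l r) (k + r)"
        by simp
      moreover have "Bgraph_on (I - {x}) J' L \<subseteq> H"
        using Suc.prems(1) Bgraph_on_mono[of "I - {x}" I J' J L] \<open>J' \<subseteq> J\<close> by blast
      moreover have "finite J'" "k + r \<le> card J'"
        using Suc.prems(2,3) \<open>J' \<subseteq> J\<close> \<open>card J \<le> Suc (card J')\<close> finite_subset by auto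
      ultimately show "contains_copy {e \<in> Bgraph_on (I - {x}) J' L. c e} (matching (Suc r))"
        using Suc.IH by blast
    qed
  qed
qed

lemma arrows_Bgraph_pad_first:
  assumes "\<And>i j. 1 \<le> i \<Longrightarrow> i \<le> j \<Longrightarrow> j \<le> k \<Longrightarrow> l j \<le> l i"
  shows "arrows (Bgraph (k + r) (pad_first l r)) (matching (Suc r)) (Bgraph k l)"
  unfolding arrows_def
proof
  fix c :: "bvert set \<Rightarrow> bool"
  let ?H = "Bgraph (k + r) (pad_first l r)"
  have "rows_dominate {1..k + r} (pad_first l r) (pad_first l r) (k + r)"
    unfolding rows_dominate_def by (intro exI[of _ id]) auto
  then have "contains_copy {e \<in> ?H. c e} (matching (Suc r))"
    if "\<not> contains_copy {e \<in> ?H. \<not> c e} (Bgraph k l)"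
    using red_matching_in_Bgraph_on[OF assms that]
    unfolding Bgraph_eq_Bgraph_on by simp
  then show "contains_copy {e \<in> ?H. c e} (matching (Suc r)) \<or> contains_copy {e \<in> ?H. \<not> c e} (Bgraph k l)"
    by blast
qed

lemma size_ramsey_matching_Bgraph:
  assumes "1 \<le> k" and mono: "\<And>i j. 1 \<le> i \<Longrightarrow> i \<le> j \<Longrightarrow> j \<le> k \<Longrightarrow> l j \<le> l i"
  shows "r * (k + l 1) + (k * k + (\<Sum>i=1..k. l i)) \<le> size_ramsey (matching (Suc r)) (Bgraph k l)"
    and "size_ramsey (matching (Suc r)) (Bgraph k l) \<le> (k + r) * (k + r) + r * l 1 + (\<Sum>i=1..k. l i)"
proof -
  let ?host = "Bgraph (k + r) (pad_first l r)"
  have host: "is_graph ?host" "arrows ?host (matching (Suc r)) (Bgraph k l)"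
    using arrows_Bgraph_pad_first[OF mono] by (simp_all add: is_graph_Bgraph_on Bgraph_eq_Bgraph_on)
  have "degree (Bgraph k l) (PA 1) = k + l 1" "card (Bgraph k l) = k * k + (\<Sum>i=1..k. l i)"
    using assms(1) unfolding Bgraph_eq_Bgraph_on by (simp_all add: degree_Bgraph_on_PA card_Bgraph_on)
  then show "r * (k + l 1) + (k * k + (\<Sum>i=1..k. l i)) \<le> size_ramsey (matching (Suc r)) (Bgraph k l)"
    using size_ramsey_matching_ge[OF host, of "PA 1"] by simp
  have "card ?host = (k + r) * (k + r) + r * l 1 + (\<Sum>i=1..k. l i)"
    unfolding Bgraph_eq_Bgraph_on
    using sum_pad_first[where k = k and r = r and l = l] by (simp add: card_Bgraph_on)
  then show "size_ramsey (matching (Suc r)) (Bgraph k l) \<le> (k + r) * (k + r) + r * l 1 + (\<Sum>i=1..k. l i)"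
    using size_ramsey_le[OF host] by simp
qed

theorem proposition3p3:
  fixes k t :: nat and l :: "nat \<Rightarrow> nat" and n :: int
  assumes "k \<ge> 2"
    and "\<And>i j. 1 \<le> i \<Longrightarrow> i \<le> j \<Longrightarrow> j \<le> k \<Longrightarrow> l j \<le> l i"
    and "n = 2 * int k + (\<Sum>i=1..k. int (l i))"
    and "t \<ge> 1"
  shows "(int t - 1) * (int k + int (l 1)) + n + int k * (int k - 2)
           \<le> int (size_ramsey (matching t) (Bgraph k l))
       \<and> int (size_ramsey (matching t) (Bgraph k l))
           \<le> n + (int t - 1) * int (l 1) + (int k + int t - 1)^2 - 2 * int k"
proof -
  obtain r where t: "t = Suc r"
    using assms(4) by (cases t) auto
  define S where "S = (\<Sum>i=1..k. l i)"
  define R where "R = size_ramsey (matching t) (Bgraph k l)"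
  have "int (r * (k + l 1) + (k * k + S)) \<le> int R"
    "int R \<le> int ((k + r) * (k + r) + r * l 1 + S)"
    using size_ramsey_matching_Bgraph[of k l r] assms(1,2)
    unfolding t R_def S_def of_nat_le_iff by simp_all
  moreover have "int t - 1 = int r" "n = 2 * int k + int S"
    using t assms(3) unfolding S_def by simp_all
  ultimately show ?thesis
    unfolding R_def[symmetric] by (simp add: algebra_simps power2_eq_square)
qed

end
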